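(* (a) For any ultrafilter $x\in I$ and any $n\in\mathbb{N}$, there exists an ultrafilter $y\in\overline{L_n}$ such that $y\,\tilde{\mid}\,x$. (b) For any $n\in\mathbb{N}$ and any ultrafilter $x\in L_n^*$, there exists an ultrafilter $y\in I$ such that $x\,\tilde{\mid}\,y$. (c) There exist ultrafilters $x\in I$ and $y\in I$ such that $y\,\tilde{\mid}\,x$.
   Context: $\mathbb{N}=\{1,2,3,\dots\}$; $\beta\mathbb{N}$ is the set of ultrafilters on $\mathbb{N}$ (Stone–Čech compactification, naturals identified with principal ultrafilters). For $A\subseteq\mathbb{N}$, $\overline{A}=\{x\in\beta\mathbb{N}:A\in x\}$ and $A^*=\overline{A}\setminus A$. $P$ is the set of primes, $L_0=\{1\}$, $L_n=\{a_1\cdots a_n:a_i\in P\}$. $I=\bigcap_{i=0}^\infty\overline{\mathbb{N}\setminus L_i}$ (ultrafilters containing none of the $L_i$). For $x,y\in\beta\mathbb{N}$, $x\,\tilde{\mid}\,y$ iff for every $A\in x$ the set $\{k\in\mathbb{N}:\exists a\in A,\ a\mid k\}$ belongs to $y$. *)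

theory Defs
  imports Main "HOL-Computational_Algebra.Primes"
begin

text \<open>The natural numbers N = {1,2,3,...} as a subset of type nat.\<close>
definition Npos :: "nat set" where
  "Npos = {n. 0 < n}"

text \<open>Ultrafilters on N, represented as families of subsets of N (points of beta N).\<close>
definition is_ultrafilter :: "nat set set \<Rightarrow> bool" where
  "is_ultrafilter U \<longleftrightarrow>
     U \<subseteq> Pow Npos \<and> Npos \<in> U \<and> {} \<notin> U \<and>
     (\<forall>A B. A \<in> U \<and> B \<in> U \<longrightarrow> A \<inter> B \<in> U) \<and>
     (\<forall>A B. A \<in> U \<and> A \<subseteq> B \<and> B \<subseteq> Npos \<longrightarrow> B \<in> U) \<and>
     (\<forall>A. A \<subseteq> Npos \<longrightarrow> A \<in> U \<or> Npos - A \<in> U)"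

definition betaN :: "nat set set set" where
  "betaN = {U. is_ultrafilter U}"

text \<open>The principal ultrafilter generated by k (identification of N inside beta N).\<close>
definition principal :: "nat \<Rightarrow> nat set set" where
  "principal k = {A. A \<subseteq> Npos \<and> k \<in> A}"

definition ucl :: "nat set \<Rightarrow> nat set set set" where
  "ucl A = {x \<in> betaN. A \<in> x}"

definition ustar :: "nat set \<Rightarrow> nat set set set" where
  "ustar A = ucl A - principal ` A"

text \<open>L_n: products of exactly n primes (with multiplicity); L_0 = {1}.\<close>
definition L :: "nat \<Rightarrow> nat set" where
  "L n = {k. \<exists>as. length as = n \<and> (\<forall>a\<in>set as. prime a) \<and> k = prod_list as}"

definition Iset :: "nat set set set" where
  "Iset = (\<Inter>i. ucl (Npos - L i))"

definition dvd_up :: "nat set \<Rightarrow> nat set" where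
  "dvd_up A = {k \<in> Npos. \<exists>a\<in>A. a dvd k}"

definition udvd :: "nat set set \<Rightarrow> nat set set \<Rightarrow> bool" where
  "udvd x y \<longleftrightarrow> (\<forall>A\<in>x. dvd_up A \<in> y)"

end

theory Submission
  imports Defs
begin

text \<open>
  Let \<open>Omega k\<close> be the number of prime factors of \<open>k\<close> counted with multiplicity,
  so that \<open>L n\<close> is the level \<open>Omega = n\<close>.

  (a) Every \<open>k\<close> has \<open>Omega k < n\<close> or a divisor in \<open>L n\<close>. Since \<open>x \<in> I\<close> contains none of
  \<open>L 0, ..., L (n - 1)\<close>, the multiples of \<open>L n\<close> form a set in \<open>x\<close>. The sets whose multiples
  are not in \<open>x\<close> form an ideal that misses \<open>L n\<close>, so \<open>L n\<close> together with the complements of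
  this ideal generate a proper filter, and every ultrafilter \<open>y\<close> extending it divides \<open>x\<close>.

  (b) The multiples of a nonempty set contain numbers \<open>a * 2 ^ m\<close> of arbitrarily large
  \<open>Omega\<close>, so the sets of multiples of members of \<open>x\<close> and the sets \<open>Omega \<ge> m\<close> generate a
  proper filter. An ultrafilter extending it lies in \<open>I\<close> and is divisible by \<open>x\<close>; this works
  for every ultrafilter \<open>x\<close>, so (c) follows by applying it to some element of \<open>I\<close>.
\<close>

definition Omega :: "nat \<Rightarrow> nat" where
  "Omega k = size (prime_factorization k)"

lemma L_eq: "L n = {k. 0 < k \<and> Omega k = n}"
proof (intro set_eqI iffI)
  fix k assume "k \<in> L n"
  then obtain ps where ps: "length ps = n" "\<forall>p\<in>set ps. prime p" "k = prod_list ps"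
    unfolding L_def by blast
  have k: "k = prod_mset (mset ps)"
    using ps(3) by (simp add: prod_mset_prod_list)
  have "prime_factorization k = mset ps"
    unfolding k by (rule prime_factorization_prod_mset_primes) (use ps(2) in auto)
  moreover have "k \<noteq> 0"
    using ps(2,3) by (auto simp: prod_list_zero_iff)
  ultimately show "k \<in> {k. 0 < k \<and> Omega k = n}"
    using ps(1) by (simp add: Omega_def)
next
  fix k assume k: "k \<in> {k. 0 < k \<and> Omega k = n}"
  define ps where "ps = sorted_list_of_multiset (prime_factorization k)"
  have ps: "mset ps = prime_factorization k"
    unfolding ps_def by simp
  have "length ps = n"
    using k by (simp add: Omega_def flip: ps)
  moreover have "\<forall>p\<in>set ps. prime p"
    by (metis in_prime_factors_imp_prime ps set_mset_mset)
  moreover have "k = prod_list ps"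
    using k by (simp add: ps prod_mset_prime_factorization flip: prod_mset_prod_list)
  ultimately show "k \<in> L n"
    unfolding L_def by blast
qed

lemma L_subset_Npos: "L n \<subseteq> Npos"
  by (auto simp: L_eq Npos_def)

lemma Omega_mult: "0 < a \<Longrightarrow> 0 < b \<Longrightarrow> Omega (a * b) = Omega a + Omega b"
  by (simp add: Omega_def prime_factorization_mult)

lemma Omega_prime_power: "prime p \<Longrightarrow> Omega (p ^ m) = m"
  by (simp add: Omega_def prime_factorization_prime_power)

lemma exists_subset_mset_size: "n \<le> size M \<Longrightarrow> \<exists>N. N \<subseteq># M \<and> size N = n"
proof (induction M arbitrary: n)
  case empty
  then show ?case by simp
next
  case (add x M)
  show ?case
  proof (cases "n \<le> size M")
    case True
    then show ?thesis
      using add.IH by (metis add_mset_add_single mset_subset_eq_add_left subset_mset.order_trans)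
  next
    case False
    then show ?thesis
      using add.prems by (intro exI[of _ "add_mset x M"]) simp
  qed
qed

lemma exists_divisor_Omega:
  assumes "0 < k" "n \<le> Omega k"
  shows "\<exists>d. d dvd k \<and> 0 < d \<and> Omega d = n"
proof -
  obtain N where N: "N \<subseteq># prime_factorization k" "size N = n"
    using exists_subset_mset_size assms(2) unfolding Omega_def by blast
  have "prime_factorization (prod_mset N) = N"
    using N(1) by (intro prime_factorization_prod_mset_primes)
      (meson in_prime_factors_imp_prime mset_subset_eqD)
  moreover have "prod_mset N dvd k"
    using prod_mset_subset_imp_dvd[OF N(1)] assms(1) by (simp add: prod_mset_prime_factorization)
  ultimately show ?thesis
    using N(2) assms(1) by (intro exI[of _ "prod_mset N"]) (auto simp: Omega_def intro: Nat.gr0I)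
qed

definition is_proper_filter :: "nat set set \<Rightarrow> bool" where
  "is_proper_filter F \<longleftrightarrow>
     F \<subseteq> Pow Npos \<and> Npos \<in> F \<and> {} \<notin> F \<and>
     (\<forall>A B. A \<in> F \<and> B \<in> F \<longrightarrow> A \<inter> B \<in> F) \<and>
     (\<forall>A B. A \<in> F \<and> A \<subseteq> B \<and> B \<subseteq> Npos \<longrightarrow> B \<in> F)"

lemma is_ultrafilter_iff:
  "is_ultrafilter U \<longleftrightarrow> is_proper_filter U \<and> (\<forall>A. A \<subseteq> Npos \<longrightarrow> A \<in> U \<or> Npos - A \<in> U)"
  unfolding is_ultrafilter_def is_proper_filter_def by (simp only: conj_assoc)

lemma
  assumes "is_proper_filter F"
  shows filter_subset_Pow: "F \<subseteq> Pow Npos"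
    and filter_Npos: "Npos \<in> F"
    and filter_empty: "{} \<notin> F"
    and filter_Int: "A \<in> F \<Longrightarrow> B \<in> F \<Longrightarrow> A \<inter> B \<in> F"
    and filter_mono: "A \<in> F \<Longrightarrow> A \<subseteq> B \<Longrightarrow> B \<subseteq> Npos \<Longrightarrow> B \<in> F"
  using assms unfolding is_proper_filter_def by blast+

lemma is_proper_filterI:
  assumes "F \<subseteq> Pow Npos" "Npos \<in> F" "{} \<notin> F"
    and "\<And>A B. A \<in> F \<Longrightarrow> B \<in> F \<Longrightarrow> A \<inter> B \<in> F"
    and "\<And>A B. A \<in> F \<Longrightarrow> A \<subseteq> B \<Longrightarrow> B \<subseteq> Npos \<Longrightarrow> B \<in> F"
  shows "is_proper_filter F"
  using assms unfolding is_proper_filter_def by blast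

lemma filter_chain_Union:
  assumes "C \<noteq> {}" "subset.chain {G. is_proper_filter G \<and> F \<subseteq> G} C"
  shows "\<Union>C \<in> {G. is_proper_filter G \<and> F \<subseteq> G}"
proof -
  have filters: "\<And>G. G \<in> C \<Longrightarrow> is_proper_filter G" "\<And>G. G \<in> C \<Longrightarrow> F \<subseteq> G"
    and chain: "\<And>G H. G \<in> C \<Longrightarrow> H \<in> C \<Longrightarrow> G \<subseteq> H \<or> H \<subseteq> G"
    using assms(2) unfolding subset.chain_def by blast+
  have "is_proper_filter (\<Union>C)"
  proof (rule is_proper_filterI)
    show "\<Union>C \<subseteq> Pow Npos" "{} \<notin> \<Union>C"
      using filters(1) filter_subset_Pow filter_empty by blast+
    show "Npos \<in> \<Union>C"
      using assms(1) filters(1) filter_Npos by blast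
    show "A \<inter> B \<in> \<Union>C" if AB: "A \<in> \<Union>C" "B \<in> \<Union>C" for A B
    proof -
      obtain G H where GH: "G \<in> C" "H \<in> C" "A \<in> G" "B \<in> H"
        using AB by blast
      then consider "A \<in> H" "B \<in> H" | "A \<in> G" "B \<in> G"
        using chain[OF GH(1,2)] by blast
      then show ?thesis
        using GH(1,2) filters(1) filter_Int by cases blast+
    qed
    show "B \<in> \<Union>C" if "A \<in> \<Union>C" "A \<subseteq> B" "B \<subseteq> Npos" for A B
      using that filters(1) filter_mono by blast
  qed
  then show ?thesis
    using assms(1) filters(2) by blast
qed

lemma maximal_filter_is_ultrafilter:
  assumes M: "is_proper_filter M"
    and maximal: "\<And>G. is_proper_filter G \<Longrightarrow> M \<subseteq> G \<Longrightarrow> G = M"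
  shows "is_ultrafilter M"
  unfolding is_ultrafilter_iff
proof (intro conjI allI impI M)
  fix A assume A: "A \<subseteq> Npos"
  show "A \<in> M \<or> Npos - A \<in> M"
  proof (rule disjCI)
    assume compl: "Npos - A \<notin> M"
    define G where "G = {B. B \<subseteq> Npos \<and> (\<exists>C\<in>M. C \<inter> A \<subseteq> B)}"
    have "is_proper_filter G"
    proof (rule is_proper_filterI)
      show "G \<subseteq> Pow Npos"
        unfolding G_def by blast
      show "Npos \<in> G"
        using filter_Npos[OF M] unfolding G_def by blast
      show "{} \<notin> G"
      proof
        assume "{} \<in> G"
        then obtain C where "C \<in> M" "C \<subseteq> Npos - A"
          using filter_subset_Pow[OF M] unfolding G_def by blast
        then show False
          using filter_mono[OF M] compl by blast
      qed
      show "B \<inter> B' \<in> G" if BB': "B \<in> G" "B' \<in> G" for B B'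
      proof -
        obtain C C' where C: "C \<in> M" "C' \<in> M" "C \<inter> A \<subseteq> B" "C' \<inter> A \<subseteq> B'"
          using BB' unfolding G_def by blast
        have "C \<inter> C' \<in> M"
          using filter_Int[OF M C(1,2)] .
        moreover have "(C \<inter> C') \<inter> A \<subseteq> B \<inter> B'" "B \<inter> B' \<subseteq> Npos"
          using C(3,4) BB' unfolding G_def by blast+
        ultimately show ?thesis
          unfolding G_def by blast
      qed
      show "B' \<in> G" if "B \<in> G" "B \<subseteq> B'" "B' \<subseteq> Npos" for B B'
        using that unfolding G_def by blast
    qed
    moreover have "M \<subseteq> G"
      using filter_subset_Pow[OF M] unfolding G_def by blast
    ultimately have "G = M"
      by (rule maximal)
    moreover have "A \<in> G"
      using A filter_Npos[OF M] unfolding G_def by blast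
    ultimately show "A \<in> M"
      by simp
  qed
qed

lemma ultrafilter_extends_filter:
  assumes "is_proper_filter F"
  shows "\<exists>U. is_ultrafilter U \<and> F \<subseteq> U"
proof -
  have "{G. is_proper_filter G \<and> F \<subseteq> G} \<noteq> {}"
    using assms by blast
  from subset_Zorn_nonempty[OF this filter_chain_Union]
  obtain M where M: "is_proper_filter M" "F \<subseteq> M"
    and maximal: "\<forall>G\<in>{G. is_proper_filter G \<and> F \<subseteq> G}. M \<subseteq> G \<longrightarrow> G = M"
    by blast
  have "is_ultrafilter M"
  proof (rule maximal_filter_is_ultrafilter[OF M(1)])
    show "G = M" if "is_proper_filter G" "M \<subseteq> G" for G
      using that M(2) maximal by blast
  qed
  then show ?thesis
    using M(2) by blast
qed


lemma ultrafilter_is_proper_filter: "is_ultrafilter U \<Longrightarrow> is_proper_filter U"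
  by (simp add: is_ultrafilter_iff)

lemma ultrafilter_Diff_iff:
  assumes U: "is_ultrafilter U" and A: "A \<subseteq> Npos"
  shows "Npos - A \<in> U \<longleftrightarrow> A \<notin> U"
proof
  assume "Npos - A \<in> U"
  then show "A \<notin> U"
    using filter_Int[OF ultrafilter_is_proper_filter[OF U], of A "Npos - A"]
      filter_empty[OF ultrafilter_is_proper_filter[OF U]] by auto
next
  assume "A \<notin> U"
  then show "Npos - A \<in> U"
    using U A by (auto simp: is_ultrafilter_iff)
qed

lemma ultrafilter_Un_iff:
  assumes U: "is_ultrafilter U" and "A \<subseteq> Npos" "B \<subseteq> Npos"
  shows "A \<union> B \<in> U \<longleftrightarrow> A \<in> U \<or> B \<in> U"
proof -
  have F: "is_proper_filter U"
    using U by (rule ultrafilter_is_proper_filter)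
  have "A \<union> B \<notin> U" if "A \<notin> U" "B \<notin> U"
  proof
    assume "A \<union> B \<in> U"
    moreover have "(Npos - A) \<inter> (Npos - B) \<in> U"
      using that assms filter_Int[OF F] ultrafilter_Diff_iff[OF U] by blast
    ultimately have "(A \<union> B) \<inter> ((Npos - A) \<inter> (Npos - B)) \<in> U"
      by (rule filter_Int[OF F])
    moreover have "(A \<union> B) \<inter> ((Npos - A) \<inter> (Npos - B)) = {}"
      by blast
    ultimately show False
      using filter_empty[OF F] by simp
  qed
  then show ?thesis
    using assms filter_mono[OF F] by blast
qed

lemma dvd_up_subset_Npos: "dvd_up A \<subseteq> Npos"
  by (auto simp: dvd_up_def)

lemma dvd_up_empty [simp]: "dvd_up {} = {}"
  by (simp add: dvd_up_def)

lemma dvd_up_Un: "dvd_up (A \<union> B) = dvd_up A \<union> dvd_up B"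
  by (auto simp: dvd_up_def)

lemma dvd_up_mono: "A \<subseteq> B \<Longrightarrow> dvd_up A \<subseteq> dvd_up B"
  by (auto simp: dvd_up_def)

lemma Iset_imp_ultrafilter: "x \<in> Iset \<Longrightarrow> is_ultrafilter x"
  by (auto simp: Iset_def ucl_def betaN_def)

lemma Iset_small_Omega_notin:
  assumes x: "x \<in> Iset"
  shows "{k. 0 < k \<and> Omega k < n} \<notin> x"
proof (induction n)
  case 0
  then show ?case
    using filter_empty[OF ultrafilter_is_proper_filter[OF Iset_imp_ultrafilter[OF x]]] by simp
next
  case (Suc n)
  have "Npos - L n \<in> x"
    using x by (auto simp: Iset_def ucl_def)
  then have "L n \<notin> x"
    using ultrafilter_Diff_iff[OF Iset_imp_ultrafilter[OF x] L_subset_Npos] by blast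
  moreover have "{k. 0 < k \<and> Omega k < Suc n} = {k. 0 < k \<and> Omega k < n} \<union> L n"
    by (auto simp: L_eq)
  ultimately show ?case
    using Suc.IH ultrafilter_Un_iff[OF Iset_imp_ultrafilter[OF x] _ L_subset_Npos]
    by (simp add: Npos_def subset_eq)
qed

lemma dvd_up_L_in_Iset:
  assumes x: "x \<in> Iset"
  shows "dvd_up (L n) \<in> x"
proof -
  let ?small = "{k. 0 < k \<and> Omega k < n}"
  have U: "is_ultrafilter x"
    using x by (rule Iset_imp_ultrafilter)
  have "Npos = ?small \<union> dvd_up (L n)"
  proof (intro equalityI subsetI)
    fix k assume "k \<in> Npos"
    then show "k \<in> ?small \<union> dvd_up (L n)"
      using exists_divisor_Omega[of k n] by (force simp: Npos_def dvd_up_def L_eq)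
  qed (auto simp: Npos_def dvd_up_def)
  then have "?small \<union> dvd_up (L n) \<in> x"
    using filter_Npos[OF ultrafilter_is_proper_filter[OF U]] by simp
  moreover have "?small \<subseteq> Npos"
    by (auto simp: Npos_def)
  ultimately show ?thesis
    using ultrafilter_Un_iff[OF U _ dvd_up_subset_Npos] Iset_small_Omega_notin[OF x] by blast
qed

lemma exists_udvd_divisor_in_ucl:
  assumes x: "is_ultrafilter x" and B: "B \<subseteq> Npos" "dvd_up B \<in> x"
  shows "\<exists>y\<in>ucl B. udvd y x"
proof -
  define F where "F = {A. A \<subseteq> Npos \<and> dvd_up (B - A) \<notin> x}"
  have x_filter: "is_proper_filter x"
    using x by (rule ultrafilter_is_proper_filter)
  have "is_proper_filter F"
  proof (rule is_proper_filterI)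
    show "F \<subseteq> Pow Npos" "{} \<notin> F"
      using B(2) by (auto simp: F_def)
    have "dvd_up (B - Npos) = {}"
      using B(1) by (metis Diff_eq_empty_iff dvd_up_empty)
    then show "Npos \<in> F"
      using filter_empty[OF x_filter] by (simp add: F_def)
    show "A \<inter> A' \<in> F" if "A \<in> F" "A' \<in> F" for A A'
    proof -
      have "B - A \<inter> A' = (B - A) \<union> (B - A')"
        by blast
      then show ?thesis
        using that ultrafilter_Un_iff[OF x dvd_up_subset_Npos dvd_up_subset_Npos]
        by (auto simp: F_def dvd_up_Un)
    qed
    show "A' \<in> F" if "A \<in> F" "A \<subseteq> A'" "A' \<subseteq> Npos" for A A'
      using that filter_mono[OF x_filter _ dvd_up_mono dvd_up_subset_Npos, of "B - A'" "B - A"]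
      by (auto simp: F_def)
  qed
  then obtain y where y: "is_ultrafilter y" "F \<subseteq> y"
    using ultrafilter_extends_filter by blast
  have "B \<in> y"
    using y(2) B(1) filter_empty[OF x_filter] by (auto simp: F_def)
  moreover have "dvd_up A \<in> x" if A: "A \<in> y" for A
  proof (rule ccontr)
    assume "dvd_up A \<notin> x"
    moreover have "dvd_up (B - (Npos - A)) \<subseteq> dvd_up A"
      using B(1) by (intro dvd_up_mono) blast
    ultimately have "Npos - A \<in> F"
      using filter_mono[OF x_filter _ _ dvd_up_subset_Npos] by (auto simp: F_def)
    then show False
      using y A ultrafilter_Diff_iff[OF y(1)] filter_subset_Pow[OF ultrafilter_is_proper_filter[OF y(1)]]
      by blast
  qed
  ultimately show ?thesis
    using y(1) by (auto simp: ucl_def betaN_def udvd_def)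
qed

lemma dvd_up_large_Omega:
  assumes "a \<in> A" "0 < a"
  shows "\<exists>k\<in>dvd_up A. m \<le> Omega k"
proof -
  have "Omega (a * 2 ^ m) = Omega a + m"
    using assms(2) by (simp add: Omega_mult Omega_prime_power)
  then show ?thesis
    using assms by (intro bexI[of _ "a * 2 ^ m"]) (auto simp: dvd_up_def Npos_def intro: bexI[of _ a])
qed

lemma exists_udvd_multiple_in_Iset:
  assumes u: "is_ultrafilter u"
  shows "\<exists>v\<in>Iset. udvd u v"
proof -
  define F where
    "F = {B. B \<subseteq> Npos \<and> (\<exists>A\<in>u. \<exists>m. dvd_up A \<inter> {k. m \<le> Omega k} \<subseteq> B)}"
  have u_filter: "is_proper_filter u"
    using u by (rule ultrafilter_is_proper_filter)
  have "is_proper_filter F"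
  proof (rule is_proper_filterI)
    show "F \<subseteq> Pow Npos"
      by (auto simp: F_def)
    show "Npos \<in> F"
      using filter_Npos[OF u_filter] dvd_up_subset_Npos by (auto simp: F_def)
    show "{} \<notin> F"
    proof
      assume "{} \<in> F"
      then obtain A m where A: "A \<in> u" "dvd_up A \<inter> {k. m \<le> Omega k} = {}"
        by (auto simp: F_def)
      have "A \<noteq> {}"
        using A(1) filter_empty[OF u_filter] by blast
      moreover have "A \<subseteq> Npos"
        using A(1) filter_subset_Pow[OF u_filter] by blast
      ultimately obtain a where "a \<in> A" "0 < a"
        unfolding Npos_def by blast
      then show False
        using dvd_up_large_Omega[of a A m] A(2) by blast
    qed
    show "B \<inter> B' \<in> F" if BB': "B \<in> F" "B' \<in> F" for B B'
    proof -
      obtain A m A' m' where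
        "A \<in> u" "dvd_up A \<inter> {k. m \<le> Omega k} \<subseteq> B"
        "A' \<in> u" "dvd_up A' \<inter> {k. m' \<le> Omega k} \<subseteq> B'"
        using BB' by (auto simp: F_def)
      moreover have "dvd_up (A \<inter> A') \<subseteq> dvd_up A \<inter> dvd_up A'"
        by (simp add: dvd_up_mono)
      ultimately have "dvd_up (A \<inter> A') \<inter> {k. max m m' \<le> Omega k} \<subseteq> B \<inter> B'"
        by auto
      moreover have "A \<inter> A' \<in> u"
        using filter_Int[OF u_filter \<open>A \<in> u\<close> \<open>A' \<in> u\<close>] .
      ultimately show ?thesis
        using BB' unfolding F_def by blast
    qed
    show "B' \<in> F" if "B \<in> F" "B \<subseteq> B'" "B' \<subseteq> Npos" for B B'
      using that unfolding F_def by blast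
  qed
  then obtain v where v: "is_ultrafilter v" "F \<subseteq> v"
    using ultrafilter_extends_filter by blast
  have "dvd_up A \<in> F" if "A \<in> u" for A
    using that dvd_up_subset_Npos by (auto simp: F_def)
  moreover have "Npos - L i \<in> F" for i
    using filter_Npos[OF u_filter] dvd_up_subset_Npos
    by (auto simp: F_def L_eq intro!: bexI[of _ Npos] exI[of _ "Suc i"])
  ultimately show ?thesis
    using v by (auto simp: Iset_def ucl_def betaN_def udvd_def)
qed


theorem theorem3p5:
  shows "(\<forall>x\<in>Iset. \<forall>n\<in>Npos. \<exists>y\<in>ucl (L n). udvd y x)
       \<and> (\<forall>n\<in>Npos. \<forall>x\<in>ustar (L n). \<exists>y\<in>Iset. udvd x y)
       \<and> (\<exists>x\<in>Iset. \<exists>y\<in>Iset. udvd y x)"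
proof (intro conjI ballI)
  show "\<exists>y\<in>ucl (L n). udvd y x" if x: "x \<in> Iset" for x n
    using exists_udvd_divisor_in_ucl[OF Iset_imp_ultrafilter[OF x] L_subset_Npos dvd_up_L_in_Iset[OF x]] .
  show "\<exists>y\<in>Iset. udvd x y" if "x \<in> ustar (L n)" for x n
  proof (rule exists_udvd_multiple_in_Iset)
    show "is_ultrafilter x"
      using that by (simp add: ustar_def ucl_def betaN_def)
  qed
  have "is_ultrafilter (principal 1)"
    unfolding is_ultrafilter_def principal_def Npos_def by blast
  then obtain y where y: "y \<in> Iset"
    using exists_udvd_multiple_in_Iset by blast
  then obtain x where "x \<in> Iset" "udvd y x"
    using exists_udvd_multiple_in_Iset[OF Iset_imp_ultrafilter[OF y]] by blast
  then show "\<exists>x\<in>Iset. \<exists>y\<in>Iset. udvd y x"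
    using y by blast
qed

end
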